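(* Let $(G,\prec)$ be a POP-graph with input edges $i_1\prec i_2\prec\cdots\prec i_m$ and output edges $o_1\prec\cdots\prec o_n$. (1) For $e\in E(G)\setminus I(G)$ and $1\le k\le m$: $e\in P_k$ if and only if $i^+(e)=i_k$. (2) For $e\in E(G)\setminus O(G)$ and $1\le k\le n$: $e\in Q_k$ if and only if $o^-(e)=o_k$.
   Context: A progressive graph is a finite directed acyclic graph (parallel edges allowed) in which every source and every sink has degree one; degree-one vertices are boundary vertices. $I(G)$ is the set of input edges (initial vertex a boundary vertex), $O(G)$ the set of output edges (terminal vertex a boundary vertex). For edges write $e\to e'$ if $e\neq e'$ and there is a directed path whose first edge is $e$ and last edge is $e'$. A planar order on $G$ is a linear order $\prec$ on $E(G)$ such that (P1) $e_1\to e_2$ implies $e_1\prec e_2$; (P2) if $e_1\prec e_2\prec e_3$ and $e_1\to e_3$ then $e_1\to e_2$ or $e_2\to e_3$. A POP-graph is a progressive graph with a planar order. $i^+(e)$ is the $\prec$-maximum of $\{i\in I(G): i\to e\}$ and $o^-(e)$ the $\prec$-minimum of $\{o\in O(G): e\to o\}$. Intervals: $P_k=\{e: i_k\prec e\prec i_{k+1}\}$ for $1\le k\le m-1$, $P_m=\{e: i_m\prec e\}$; $Q_1=\{e: e\prec o_1\}$, $Q_k=\{e: o_{k-1}\prec e\prec o_k\}$ for $2\le k\le n$. *)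

theory Defs
  imports Main
begin

text \<open>A finite directed graph with parallel edges is given by a vertex set V, an edge set E
  and the initial/terminal vertex maps src, tgt.\<close>

definition indeg :: "'e set \<Rightarrow> ('e \<Rightarrow> 'v) \<Rightarrow> 'v \<Rightarrow> nat" where
  "indeg E tgt v = card {e \<in> E. tgt e = v}"

definition outdeg :: "'e set \<Rightarrow> ('e \<Rightarrow> 'v) \<Rightarrow> 'v \<Rightarrow> nat" where
  "outdeg E src v = card {e \<in> E. src e = v}"

definition degree :: "'e set \<Rightarrow> ('e \<Rightarrow> 'v) \<Rightarrow> ('e \<Rightarrow> 'v) \<Rightarrow> 'v \<Rightarrow> nat" where
  "degree E src tgt v = indeg E tgt v + outdeg E src v"

definition edge_succ :: "'e set \<Rightarrow> ('e \<Rightarrow> 'v) \<Rightarrow> ('e \<Rightarrow> 'v) \<Rightarrow> ('e \<times> 'e) set" where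
  "edge_succ E src tgt = {(a, b). a \<in> E \<and> b \<in> E \<and> tgt a = src b}"

definition reach :: "'e set \<Rightarrow> ('e \<Rightarrow> 'v) \<Rightarrow> ('e \<Rightarrow> 'v) \<Rightarrow> 'e \<Rightarrow> 'e \<Rightarrow> bool" where
  "reach E src tgt e e' \<longleftrightarrow> e \<noteq> e' \<and> (e, e') \<in> (edge_succ E src tgt)\<^sup>+"

definition progressive_graph :: "'v set \<Rightarrow> 'e set \<Rightarrow> ('e \<Rightarrow> 'v) \<Rightarrow> ('e \<Rightarrow> 'v) \<Rightarrow> bool" where
  "progressive_graph V E src tgt \<longleftrightarrow>
     finite V \<and> finite E \<and> src ` E \<subseteq> V \<and> tgt ` E \<subseteq> V \<and>
     \<comment> \<open>acyclic: no closed directed path\<close>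
     (\<forall>e \<in> E. (e, e) \<notin> (edge_succ E src tgt)\<^sup>+) \<and>
     \<comment> \<open>every source and every sink has degree one\<close>
     (\<forall>v \<in> V. (indeg E tgt v = 0 \<or> outdeg E src v = 0) \<longrightarrow> degree E src tgt v = 1)"

definition input_edges :: "'e set \<Rightarrow> ('e \<Rightarrow> 'v) \<Rightarrow> ('e \<Rightarrow> 'v) \<Rightarrow> 'e set" where
  "input_edges E src tgt = {e \<in> E. degree E src tgt (src e) = 1}"

definition output_edges :: "'e set \<Rightarrow> ('e \<Rightarrow> 'v) \<Rightarrow> ('e \<Rightarrow> 'v) \<Rightarrow> 'e set" where
  "output_edges E src tgt = {e \<in> E. degree E src tgt (tgt e) = 1}"

definition planar_order :: "'e set \<Rightarrow> ('e \<Rightarrow> 'v) \<Rightarrow> ('e \<Rightarrow> 'v) \<Rightarrow> ('e \<Rightarrow> 'e \<Rightarrow> bool) \<Rightarrow> bool" where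
  "planar_order E src tgt prec \<longleftrightarrow>
     (\<forall>a. \<forall>b. prec a b \<longrightarrow> a \<in> E \<and> b \<in> E) \<and>
     (\<forall>a \<in> E. \<not> prec a a) \<and>
     (\<forall>a \<in> E. \<forall>b \<in> E. \<forall>c \<in> E. prec a b \<longrightarrow> prec b c \<longrightarrow> prec a c) \<and>
     (\<forall>a \<in> E. \<forall>b \<in> E. a \<noteq> b \<longrightarrow> prec a b \<or> prec b a) \<and>
     (\<forall>e1 \<in> E. \<forall>e2 \<in> E. reach E src tgt e1 e2 \<longrightarrow> prec e1 e2) \<and>
     (\<forall>e1 \<in> E. \<forall>e2 \<in> E. \<forall>e3 \<in> E. prec e1 e2 \<longrightarrow> prec e2 e3 \<longrightarrow> reach E src tgt e1 e3 \<longrightarrow>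
        reach E src tgt e1 e2 \<or> reach E src tgt e2 e3)"

definition pop_graph :: "'v set \<Rightarrow> 'e set \<Rightarrow> ('e \<Rightarrow> 'v) \<Rightarrow> ('e \<Rightarrow> 'v) \<Rightarrow> ('e \<Rightarrow> 'e \<Rightarrow> bool) \<Rightarrow> bool" where
  "pop_graph V E src tgt prec \<longleftrightarrow> progressive_graph V E src tgt \<and> planar_order E src tgt prec"

definition i_plus :: "'e set \<Rightarrow> ('e \<Rightarrow> 'v) \<Rightarrow> ('e \<Rightarrow> 'v) \<Rightarrow> ('e \<Rightarrow> 'e \<Rightarrow> bool) \<Rightarrow> 'e \<Rightarrow> 'e" where
  "i_plus E src tgt prec e =
     (THE i. i \<in> input_edges E src tgt \<and> reach E src tgt i e \<and>
        (\<forall>j \<in> input_edges E src tgt. reach E src tgt j e \<longrightarrow> j = i \<or> prec j i))"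

definition o_minus :: "'e set \<Rightarrow> ('e \<Rightarrow> 'v) \<Rightarrow> ('e \<Rightarrow> 'v) \<Rightarrow> ('e \<Rightarrow> 'e \<Rightarrow> bool) \<Rightarrow> 'e \<Rightarrow> 'e" where
  "o_minus E src tgt prec e =
     (THE o'. o' \<in> output_edges E src tgt \<and> reach E src tgt e o' \<and>
        (\<forall>p \<in> output_edges E src tgt. reach E src tgt e p \<longrightarrow> p = o' \<or> prec o' p))"

text \<open>Intervals P_k (inputs i_1 < ... < i_m given by ins) and Q_k (outputs given by outs).\<close>
definition P_int :: "'e set \<Rightarrow> ('e \<Rightarrow> 'e \<Rightarrow> bool) \<Rightarrow> (nat \<Rightarrow> 'e) \<Rightarrow> nat \<Rightarrow> nat \<Rightarrow> 'e set" where
  "P_int E prec ins m k =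
     (if k < m then {e \<in> E. prec (ins k) e \<and> prec e (ins (k + 1))}
      else {e \<in> E. prec (ins m) e})"

definition Q_int :: "'e set \<Rightarrow> ('e \<Rightarrow> 'e \<Rightarrow> bool) \<Rightarrow> (nat \<Rightarrow> 'e) \<Rightarrow> nat \<Rightarrow> 'e set" where
  "Q_int E prec outs k =
     (if k = 1 then {e \<in> E. prec e (outs 1)}
      else {e \<in> E. prec (outs (k - 1)) e \<and> prec e (outs k)})"

end

theory Submission
  imports Defs
begin

text \<open>For an edge e that is not an input, let j be the largest index with i_j \<rightarrow> e. Then
  i_k \<prec> e holds exactly for k \<le> j: for k < j by transitivity through i_j, while for k > j axiom
  (P2) applied to i_j \<prec> i_k \<prec> e would force i_j \<rightarrow> i_k (impossible, nothing reaches an input)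
  or i_k \<rightarrow> e (contradicting maximality). Hence e lies in P_j and in no other interval, and
  i^+(e) = i_j. Part (2) is part (1) for the reversed graph, whose inputs are the outputs of G
  listed in reverse order.\<close>

lemma reach_iff_trancl:
  assumes "progressive_graph V E src tgt"
  shows "reach E src tgt a b \<longleftrightarrow> (a, b) \<in> (edge_succ E src tgt)\<^sup>+"
proof -
  have "a \<noteq> b" if "(a, b) \<in> (edge_succ E src tgt)\<^sup>+"
    using that assms by (auto simp: progressive_graph_def edge_succ_def dest: tranclD)
  then show ?thesis by (auto simp: reach_def)
qed

lemma wf_edge_succ:
  assumes "progressive_graph V E src tgt"
  shows "wf (edge_succ E src tgt)"
proof (rule finite_acyclic_wf)
  show "finite (edge_succ E src tgt)"
    using assms by (auto simp: progressive_graph_def edge_succ_def intro: finite_subset[of _ "E \<times> E"])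
  show "acyclic (edge_succ E src tgt)"
    using assms unfolding acyclic_def progressive_graph_def
    by (metis (no_types, lifting) case_prodD edge_succ_def mem_Collect_eq tranclE)
qed

lemma not_reach_input:
  assumes "progressive_graph V E src tgt" and "i \<in> input_edges E src tgt"
  shows "\<not> reach E src tgt a i"
proof
  assume "reach E src tgt a i"
  then obtain c where "(c, i) \<in> edge_succ E src tgt"
    unfolding reach_def by (meson tranclE)
  then have c: "c \<in> E" "tgt c = src i" by (auto simp: edge_succ_def)
  have "finite E" using assms(1) by (simp add: progressive_graph_def)
  then have "indeg E tgt (src i) \<noteq> 0" "outdeg E src (src i) \<noteq> 0"
    using c assms(2) by (auto simp: indeg_def outdeg_def input_edges_def)
  then show False using assms(2) by (simp add: input_edges_def degree_def)
qed

lemma input_reaches_non_input: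
  assumes pg: "progressive_graph V E src tgt"
  shows "e \<in> E \<Longrightarrow> e \<notin> input_edges E src tgt \<Longrightarrow> \<exists>i \<in> input_edges E src tgt. reach E src tgt i e"
proof (induction e rule: wf_induct_rule[OF wf_edge_succ[OF pg]])
  case (1 e)
  have "src e \<in> V" "degree E src tgt (src e) \<noteq> 1"
    using pg 1(2,3) by (auto simp: progressive_graph_def input_edges_def)
  moreover have "\<forall>v \<in> V. (indeg E tgt v = 0 \<or> outdeg E src v = 0) \<longrightarrow> degree E src tgt v = 1"
    using pg by (simp add: progressive_graph_def)
  ultimately have "{f \<in> E. tgt f = src e} \<noteq> {}"
    unfolding indeg_def by (metis card.empty)
  then obtain f where f: "f \<in> E" "tgt f = src e" by blast
  then have fe: "(f, e) \<in> edge_succ E src tgt" using \<open>e \<in> E\<close> by (simp add: edge_succ_def)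
  show ?case
  proof (cases "f \<in> input_edges E src tgt")
    case True
    then show ?thesis using fe reach_iff_trancl[OF pg] by blast
  next
    case False
    then obtain i where "i \<in> input_edges E src tgt" "reach E src tgt i f"
      using 1(1) fe f(1) by blast
    then show ?thesis using fe reach_iff_trancl[OF pg] by (meson trancl_into_trancl)
  qed
qed

context
  fixes E :: "'e set" and src tgt :: "'e \<Rightarrow> 'v" and prec :: "'e \<Rightarrow> 'e \<Rightarrow> bool"
  assumes po: "planar_order E src tgt prec"
begin

lemma planar_order_irrefl: "\<not> prec a a"
  using po unfolding planar_order_def by blast

lemma planar_order_trans: "prec a b \<Longrightarrow> prec b c \<Longrightarrow> prec a c"
  using po unfolding planar_order_def by blast

lemma planar_order_total: "a \<in> E \<Longrightarrow> b \<in> E \<Longrightarrow> a \<noteq> b \<Longrightarrow> prec a b \<or> prec b a"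
  using po unfolding planar_order_def by blast

lemma planar_order_reach: "a \<in> E \<Longrightarrow> b \<in> E \<Longrightarrow> reach E src tgt a b \<Longrightarrow> prec a b"
  using po unfolding planar_order_def by blast

lemma planar_order_between:
  "a \<in> E \<Longrightarrow> b \<in> E \<Longrightarrow> c \<in> E \<Longrightarrow> prec a b \<Longrightarrow> prec b c \<Longrightarrow> reach E src tgt a c \<Longrightarrow>
    reach E src tgt a b \<or> reach E src tgt b c"
  using po unfolding planar_order_def by blast

lemma i_plus_eqI:
  assumes "i \<in> input_edges E src tgt" and "reach E src tgt i e"
    and "\<And>j. j \<in> input_edges E src tgt \<Longrightarrow> reach E src tgt j e \<Longrightarrow> j = i \<or> prec j i"
  shows "i_plus E src tgt prec e = i"
  unfolding i_plus_def
  using assms planar_order_irrefl planar_order_trans by (rule_tac the_equality) blast+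

end

lemma mem_P_int_iff:
  assumes po: "planar_order E src tgt prec" and "e \<in> E" and "k \<in> {1..m}"
    and ins: "\<And>l. l \<in> {1..m} \<Longrightarrow> ins l \<in> E \<and> ins l \<noteq> e"
  shows "e \<in> P_int E prec ins m k \<longleftrightarrow> prec (ins k) e \<and> (k < m \<longrightarrow> \<not> prec (ins (k + 1)) e)"
proof (cases "k < m")
  case True
  then have "ins (k + 1) \<in> E" "ins (k + 1) \<noteq> e" using ins \<open>k \<in> {1..m}\<close> by auto
  then have "prec e (ins (k + 1)) \<longleftrightarrow> \<not> prec (ins (k + 1)) e"
    using \<open>e \<in> E\<close> planar_order_total[OF po] planar_order_irrefl[OF po] planar_order_trans[OF po]
    by blast
  then show ?thesis using True \<open>e \<in> E\<close> by (auto simp: P_int_def)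
next
  case False
  then show ?thesis using \<open>e \<in> E\<close> \<open>k \<in> {1..m}\<close> by (auto simp: P_int_def)
qed

lemma prec_input_iff_le_last_reaching:
  fixes ins :: "nat \<Rightarrow> 'e"
  assumes pop: "pop_graph V E src tgt prec"
    and ins_I: "ins ` {1..m} \<subseteq> input_edges E src tgt"
    and ins_mono: "\<And>j k. 1 \<le> j \<Longrightarrow> j < k \<Longrightarrow> k \<le> m \<Longrightarrow> prec (ins j) (ins k)"
    and "e \<in> E" and j: "j \<in> {1..m}" "reach E src tgt (ins j) e"
    and j_max: "\<And>l. l \<in> {1..m} \<Longrightarrow> reach E src tgt (ins l) e \<Longrightarrow> l \<le> j"
    and l: "l \<in> {1..m}"
  shows "prec (ins l) e \<longleftrightarrow> l \<le> j"
proof -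
  have pg: "progressive_graph V E src tgt" and po: "planar_order E src tgt prec"
    using pop by (auto simp: pop_graph_def)
  have ins_E: "ins l \<in> E" "ins j \<in> E"
    using ins_I j(1) l unfolding input_edges_def by blast+
  show ?thesis
  proof
    assume "prec (ins l) e"
    show "l \<le> j"
    proof (rule ccontr)
      assume "\<not> l \<le> j"
      then have "prec (ins j) (ins l)" using ins_mono[of j l] j(1) l by simp
      then have "reach E src tgt (ins j) (ins l) \<or> reach E src tgt (ins l) e"
        using planar_order_between[OF po] \<open>prec (ins l) e\<close> j(2) \<open>e \<in> E\<close> ins_E by blast
      then show False
        using not_reach_input[OF pg] ins_I l j_max[OF l] \<open>\<not> l \<le> j\<close> by blast
    qed
  next
    assume "l \<le> j"
    have "prec (ins j) e" using planar_order_reach[OF po] j(2) \<open>e \<in> E\<close> ins_E by blast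
    moreover have "l = j \<or> prec (ins l) (ins j)"
      using ins_mono[of l j] l j(1) \<open>l \<le> j\<close> by (metis atLeastAtMost_iff le_neq_implies_less)
    ultimately show "prec (ins l) e" using planar_order_trans[OF po] by blast
  qed
qed

lemma last_reaching_input:
  fixes ins :: "nat \<Rightarrow> 'e"
  assumes pg: "progressive_graph V E src tgt" and ins_I: "ins ` {1..m} = input_edges E src tgt"
    and e: "e \<in> E" "e \<notin> input_edges E src tgt"
  obtains j where "j \<in> {1..m}" "reach E src tgt (ins j) e"
    and "\<And>l. l \<in> {1..m} \<Longrightarrow> reach E src tgt (ins l) e \<Longrightarrow> l \<le> j"
proof -
  define K where "K = {l \<in> {1..m}. reach E src tgt (ins l) e}"
  obtain i where i: "i \<in> input_edges E src tgt" "reach E src tgt i e"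
    using input_reaches_non_input[OF pg e] by blast
  then obtain l where "l \<in> {1..m}" "i = ins l" using ins_I by blast
  then have "K \<noteq> {}" using i(2) unfolding K_def by blast
  moreover have "finite K" unfolding K_def by simp
  ultimately have "Max K \<in> K" "\<forall>l \<in> K. l \<le> Max K" by simp_all
  then show ?thesis using that unfolding K_def by blast
qed

theorem P_int_iff_i_plus:
  assumes pop: "pop_graph V E src tgt prec"
    and ins_bij: "bij_betw ins {1..m} (input_edges E src tgt)"
    and ins_mono: "\<And>j k. 1 \<le> j \<Longrightarrow> j < k \<Longrightarrow> k \<le> m \<Longrightarrow> prec (ins j) (ins k)"
    and e: "e \<in> E" "e \<notin> input_edges E src tgt" and k: "k \<in> {1..m}"
  shows "e \<in> P_int E prec ins m k \<longleftrightarrow> i_plus E src tgt prec e = ins k"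
proof -
  have pg: "progressive_graph V E src tgt" and po: "planar_order E src tgt prec"
    using pop by (auto simp: pop_graph_def)
  have ins_I: "ins ` {1..m} = input_edges E src tgt" using ins_bij by (simp add: bij_betw_def)
  have ins_E: "ins l \<in> E \<and> ins l \<noteq> e" if "l \<in> {1..m}" for l
    using ins_I that e(2) unfolding input_edges_def by blast
  obtain j where j: "j \<in> {1..m}" "reach E src tgt (ins j) e"
    and j_max: "\<And>l. l \<in> {1..m} \<Longrightarrow> reach E src tgt (ins l) e \<Longrightarrow> l \<le> j"
    using last_reaching_input[OF pg ins_I e] by blast
  have below: "prec (ins l) e \<longleftrightarrow> l \<le> j" if "l \<in> {1..m}" for l
    using prec_input_iff_le_last_reaching[where ins = ins and j = j,
        OF pop equalityD1[OF ins_I] ins_mono e(1) j j_max that] .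
  have i_plus: "i_plus E src tgt prec e = ins j"
  proof (rule i_plus_eqI[OF po _ j(2)])
    show "ins j \<in> input_edges E src tgt" using ins_I j(1) by blast
    fix i assume i: "i \<in> input_edges E src tgt" "reach E src tgt i e"
    then obtain l where l: "l \<in> {1..m}" "i = ins l" using ins_I by blast
    then have "l \<le> j" using j_max i(2) by blast
    then show "i = ins j \<or> prec i (ins j)"
      using ins_mono[of l j] l j(1) by (metis atLeastAtMost_iff le_neq_implies_less)
  qed
  have "e \<in> P_int E prec ins m k \<longleftrightarrow> prec (ins k) e \<and> (k < m \<longrightarrow> \<not> prec (ins (k + 1)) e)"
    by (rule mem_P_int_iff[OF po e(1) k ins_E])
  also have "\<dots> \<longleftrightarrow> k \<le> j \<and> (k < m \<longrightarrow> \<not> k + 1 \<le> j)"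
    using below[OF k] below[of "k + 1"] k by auto
  also have "\<dots> \<longleftrightarrow> k = j"
    using j(1) by auto
  also have "\<dots> \<longleftrightarrow> ins j = ins k"
    using ins_bij j(1) k unfolding bij_betw_def inj_on_def by metis
  finally show ?thesis using i_plus by simp
qed

lemma edge_succ_swap: "edge_succ E tgt src = (edge_succ E src tgt)\<inverse>"
  unfolding edge_succ_def by (auto simp: converse_unfold)

lemma reach_swap: "reach E tgt src a b \<longleftrightarrow> reach E src tgt b a"
  unfolding reach_def edge_succ_swap[of E tgt src] trancl_converse by auto

lemma degree_swap: "degree E tgt src v = degree E src tgt v"
  unfolding degree_def indeg_def outdeg_def by simp

lemma input_edges_swap: "input_edges E tgt src = output_edges E src tgt"
  unfolding input_edges_def output_edges_def degree_swap[of E tgt src] ..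

lemma progressive_graph_swap:
  assumes "progressive_graph V E src tgt"
  shows "progressive_graph V E tgt src"
  using assms
  unfolding progressive_graph_def degree_swap[of E tgt src] edge_succ_swap[of E tgt src] trancl_converse
  by (simp add: indeg_def outdeg_def disj_commute)

lemma planar_order_swap:
  assumes "planar_order E src tgt prec"
  shows "planar_order E tgt src prec\<inverse>\<inverse>"
  using assms unfolding planar_order_def reach_swap[of E tgt src] conversep_iff by blast

lemma pop_graph_swap:
  "pop_graph V E src tgt prec \<Longrightarrow> pop_graph V E tgt src prec\<inverse>\<inverse>"
  unfolding pop_graph_def using progressive_graph_swap planar_order_swap by blast

lemma o_minus_swap: "o_minus E src tgt prec e = i_plus E tgt src prec\<inverse>\<inverse> e"
  unfolding o_minus_def i_plus_def reach_swap[of E tgt src] input_edges_swap by simp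

lemma Q_int_as_P_int:
  assumes "k \<in> {1..n}"
  shows "Q_int E prec outs k = P_int E prec\<inverse>\<inverse> (\<lambda>l. outs (n + 1 - l)) n (n + 1 - k)"
  using assms by (auto simp: Q_int_def P_int_def Suc_diff_le)

theorem Q_int_iff_o_minus:
  assumes pop: "pop_graph V E src tgt prec"
    and outs_bij: "bij_betw outs {1..n} (output_edges E src tgt)"
    and outs_mono: "\<And>j k. 1 \<le> j \<Longrightarrow> j < k \<Longrightarrow> k \<le> n \<Longrightarrow> prec (outs j) (outs k)"
    and e: "e \<in> E" "e \<notin> output_edges E src tgt" and k: "k \<in> {1..n}"
  shows "e \<in> Q_int E prec outs k \<longleftrightarrow> o_minus E src tgt prec e = outs k"
proof -
  define outs' where "outs' = (\<lambda>l. outs (n + 1 - l))"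
  have "bij_betw (\<lambda>l. n + 1 - l) {1..n} {1..n}"
    by (rule bij_betw_byWitness[where f' = "\<lambda>l. n + 1 - l"]) auto
  then have bij': "bij_betw outs' {1..n} (input_edges E tgt src)"
    unfolding outs'_def input_edges_swap
    using bij_betw_trans[OF _ outs_bij] by (simp add: comp_def)
  have mono': "prec\<inverse>\<inverse> (outs' j) (outs' l)" if "1 \<le> j" "j < l" "l \<le> n" for j l
    using outs_mono[of "n + 1 - l" "n + 1 - j"] that by (simp add: outs'_def)
  have "n + 1 - k \<in> {1..n}" using k by auto
  moreover have "e \<notin> input_edges E tgt src" using e(2) by (simp add: input_edges_swap)
  ultimately have "e \<in> P_int E prec\<inverse>\<inverse> outs' n (n + 1 - k) \<longleftrightarrow> i_plus E tgt src prec\<inverse>\<inverse> e = outs' (n + 1 - k)"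
    using P_int_iff_i_plus[OF pop_graph_swap[OF pop] bij' mono' e(1)] by blast
  moreover have "Q_int E prec outs k = P_int E prec\<inverse>\<inverse> outs' n (n + 1 - k)"
    unfolding outs'_def by (rule Q_int_as_P_int[OF k])
  ultimately show ?thesis
    using k by (simp add: outs'_def o_minus_swap)
qed

theorem lemma3p3:
  fixes V :: "'v set" and E :: "'e set" and src tgt :: "'e \<Rightarrow> 'v"
    and prec :: "'e \<Rightarrow> 'e \<Rightarrow> bool"
    and ins outs :: "nat \<Rightarrow> 'e" and m n :: nat
  assumes pop: "pop_graph V E src tgt prec"
    and ins_bij: "bij_betw ins {1..m} (input_edges E src tgt)"
    and ins_mono: "\<And>j k. 1 \<le> j \<Longrightarrow> j < k \<Longrightarrow> k \<le> m \<Longrightarrow> prec (ins j) (ins k)"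
    and outs_bij: "bij_betw outs {1..n} (output_edges E src tgt)"
    and outs_mono: "\<And>j k. 1 \<le> j \<Longrightarrow> j < k \<Longrightarrow> k \<le> n \<Longrightarrow> prec (outs j) (outs k)"
  shows "(\<forall>e \<in> E - input_edges E src tgt. \<forall>k. 1 \<le> k \<and> k \<le> m \<longrightarrow>
            (e \<in> P_int E prec ins m k \<longleftrightarrow> i_plus E src tgt prec e = ins k))
       \<and> (\<forall>e \<in> E - output_edges E src tgt. \<forall>k. 1 \<le> k \<and> k \<le> n \<longrightarrow>
            (e \<in> Q_int E prec outs k \<longleftrightarrow> o_minus E src tgt prec e = outs k))"
  using P_int_iff_i_plus[OF pop ins_bij ins_mono] Q_int_iff_o_minus[OF pop outs_bij outs_mono]
  by auto

end
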